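(* Let $q\ge2$ be a prime power and $n,d$ positive integers with $d<\frac{n+1}{2}$. For $0\le i\le d$ let $m_i={n\brack i}_q-{n\brack i-1}_q$ (with ${n\brack -1}_q=0$) be the multiplicities of the Grassmann scheme $Gr(n,d)$ over $\mathbb{F}_q$. Then $m_i^2\ge m_{i-1}m_{i+1}$ for all $1\le i\le d-1$.
   Context: ${n\brack i}_q=\prod_{t=0}^{i-1}\frac{q^{n-t}-1}{q^{i-t}-1}$ is the Gaussian binomial coefficient (number of $i$-dimensional subspaces of $\mathbb{F}_q^n$). The Grassmann scheme $Gr(n,d)$ is the association scheme on the $d$-dimensional subspaces of $\mathbb{F}_q^n$, with relations given by the dimension of the intersection; in the standard ($Q$-polynomial) ordering its multiplicities are $m_i={n\brack i}_q-{n\brack i-1}_q$, $0\le i\le d$. *)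

theory Defs
  imports Complex_Main "HOL-Computational_Algebra.Primes"
begin

definition gauss_binom :: "nat \<Rightarrow> nat \<Rightarrow> int \<Rightarrow> real" where
  "gauss_binom q n i = (if i < 0 then 0 else
     (\<Prod>t<nat i. (real q ^ (n - t) - 1) / (real q ^ (nat i - t) - 1)))"

definition grass_mult :: "nat \<Rightarrow> nat \<Rightarrow> int \<Rightarrow> real" where
  "grass_mult q n i = gauss_binom q n i - gauss_binom q n (i - 1)"

definition prime_power :: "nat \<Rightarrow> bool" where
  "prime_power q \<longleftrightarrow> (\<exists>p k. prime p \<and> k \<ge> 1 \<and> q = p ^ k)"

end

theory Submission
  imports Defs
begin

text \<open>
  Write m(k+1) = r(k) m(k). Log-concavity follows once the ratios r(k) are nonnegative
  and non-increasing. The product formula for Gaussian binomials gives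
  r(k) = q (q^(n-k+1) - 1)/(q^(k+1) - 1) \<cdot> (q^b - 1)/(q^(b+2) - 1) with b = n - 2k - 1,
  also at k = 0, where m(0) = 1. The first fraction obviously decreases in k; the second
  does because (q^(b+2) - 1)^2 - (q^b - 1)(q^(b+4) - 1) = q^b (q^2 - 1)^2.
\<close>

lemma gauss_binom_of_nat:
  "gauss_binom q n (int k) =
     (\<Prod>t<k. real q ^ (n - t) - 1) / (\<Prod>t<k. real q ^ Suc t - 1)"
proof -
  have "gauss_binom q n (int k) = (\<Prod>t<k. (real q ^ (n - t) - 1) / (real q ^ (k - t) - 1))"
    by (simp add: gauss_binom_def)
  also have "\<dots> = (\<Prod>t<k. real q ^ (n - t) - 1) / (\<Prod>t<k. real q ^ (k - t) - 1)"
    by (simp add: prod_dividef)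
  also have "(\<Prod>t<k. real q ^ (k - t) - 1) = (\<Prod>t<k. real q ^ Suc (k - Suc t) - 1)"
    by (intro prod.cong refl) (metis Suc_diff_Suc lessThan_iff)
  also have "\<dots> = (\<Prod>t<k. real q ^ Suc t - 1)"
    by (rule prod.nat_diff_reindex[where g = "\<lambda>t. real q ^ Suc t - 1"])
  finally show ?thesis .
qed

lemma gauss_binom_Suc:
  "gauss_binom q n (int (Suc k)) =
     gauss_binom q n (int k) * (real q ^ (n - k) - 1) / (real q ^ Suc k - 1)"
  unfolding gauss_binom_of_nat prod.lessThan_Suc by simp

lemma power_sub_one_pos:
  fixes x :: real
  assumes "x > 1" "m > 0"
  shows "x ^ m - 1 > 0"
  using one_less_power[OF assms] by simp

lemma power_sub_one_nonneg:
  fixes x :: real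
  assumes "x \<ge> 1"
  shows "x ^ m - 1 \<ge> 0"
  using one_le_power[OF assms] by simp

lemma grass_mult_Suc:
  assumes "q \<ge> 2" "2 * k + 1 \<le> n"
  shows "grass_mult q n (int (Suc k)) =
     gauss_binom q n (int k) * real q ^ Suc k * (real q ^ (n - 2*k - 1) - 1) / (real q ^ Suc k - 1)"
proof -
  define G where "G = gauss_binom q n (int k)"
  define Y where "Y = real q ^ Suc k"
  define Z where "Z = real q ^ (n - 2*k - 1)"
  have "Y - 1 > 0"
    unfolding Y_def using assms(1) by (intro power_sub_one_pos) simp_all
  have "n - k = Suc k + (n - 2*k - 1)"
    using assms(2) by simp
  then have power_split: "real q ^ (n - k) = Y * Z"
    by (simp only: power_add Y_def Z_def)
  have "grass_mult q n (int (Suc k)) = gauss_binom q n (int (Suc k)) - G"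
    by (simp add: grass_mult_def G_def)
  also have "\<dots> = G * (real q ^ (n - k) - 1) / (Y - 1) - G"
    by (simp only: gauss_binom_Suc G_def Y_def)
  also have "\<dots> = G * Y * (Z - 1) / (Y - 1)"
    using \<open>Y - 1 > 0\<close> by (simp add: power_split field_simps)
  finally show ?thesis
    by (simp only: G_def Y_def Z_def)
qed

definition grass_ratio :: "real \<Rightarrow> nat \<Rightarrow> nat \<Rightarrow> real" where
  "grass_ratio x n k = x * ((x ^ Suc (n - k) - 1) / (x ^ Suc k - 1))
     * ((x ^ (n - 2*k - 1) - 1) / (x ^ (n - 2*k + 1) - 1))"

lemma grass_mult_Suc_eq_ratio:
  assumes "q \<ge> 2" "2 * k + 1 \<le> n"
  shows "grass_mult q n (int (Suc k)) = grass_ratio (real q) n k * grass_mult q n (int k)"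
proof (cases k)
  case 0
  have "real q ^ Suc n - 1 > 0" "real q - 1 > 0"
    using assms(1) power_sub_one_pos[of "real q" "Suc n"] by simp_all
  then show ?thesis
    using grass_mult_Suc[OF assms] 0
    by (simp add: grass_ratio_def grass_mult_def gauss_binom_def)
next
  case (Suc j)
  define x where "x = real q"
  define b where "b = n - 2*k - 1"
  define G where "G = gauss_binom q n (int j)"
  define P where "P = x ^ k"
  define A where "A = x ^ Suc (n - k) - 1"
  define S where "S = x ^ b - 1"
  define T where "T = x ^ (b + 2) - 1"
  have x1: "x > 1"
    using assms(1) by (simp add: x_def)
  have nonzero: "P - 1 \<noteq> 0" "x * P - 1 \<noteq> 0" "T \<noteq> 0"
    using power_sub_one_pos[OF x1, of k] power_sub_one_pos[OF x1, of "Suc k"]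
      power_sub_one_pos[OF x1, of "b + 2"]
    by (simp_all add: P_def T_def Suc)
  have m_k: "grass_mult q n (int k) = G * P * T / (P - 1)"
  proof -
    have "n - 2*j - 1 = b + 2"
      using assms(2) Suc by (simp add: b_def)
    then show ?thesis
      using grass_mult_Suc[OF assms(1), of j n] assms(2) Suc by (simp add: x_def G_def P_def T_def)
  qed
  have m_Suc_k: "grass_mult q n (int (Suc k)) = G * A / (P - 1) * (x * P) * S / (x * P - 1)"
  proof -
    have "n - j = Suc (n - k)"
      using assms(2) Suc by simp
    then show ?thesis
      unfolding grass_mult_Suc[OF assms] using gauss_binom_Suc[of q n j] Suc
      by (simp add: x_def G_def P_def A_def S_def b_def)
  qed
  have ratio: "grass_ratio (real q) n k = x * (A / (x * P - 1)) * (S / T)"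
  proof -
    have "n - 2*k + 1 = b + 2"
      using assms(2) by (simp add: b_def)
    then show ?thesis
      by (simp add: grass_ratio_def x_def P_def A_def S_def T_def b_def)
  qed
  show ?thesis
    unfolding m_k m_Suc_k ratio using nonzero by (simp add: divide_simps)
qed

lemma power_sub_one_log_concave:
  fixes x :: real
  assumes "x \<ge> 0"
  shows "(x ^ b - 1) * (x ^ (b + 4) - 1) \<le> (x ^ (b + 2) - 1)\<^sup>2"
proof -
  have "\<And>y. (y * x\<^sup>2 - 1)\<^sup>2 - (y - 1) * (y * x ^ 4 - 1) = y * (x\<^sup>2 - 1)\<^sup>2"
    by algebra
  then have "(x ^ (b + 2) - 1)\<^sup>2 - (x ^ b - 1) * (x ^ (b + 4) - 1) = x ^ b * (x\<^sup>2 - 1)\<^sup>2"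
    by (simp only: power_add)
  moreover have "x ^ b * (x\<^sup>2 - 1)\<^sup>2 \<ge> 0"
    using assms by simp
  ultimately show ?thesis
    by linarith
qed

lemma power_sub_one_ratio_mono:
  fixes x :: real
  assumes "x > 1"
  shows "(x ^ b - 1) / (x ^ (b + 2) - 1) \<le> (x ^ (b + 2) - 1) / (x ^ (b + 4) - 1)"
proof -
  have "x ^ (b + 2) - 1 > 0" "x ^ (b + 4) - 1 > 0"
    by (rule power_sub_one_pos[OF assms], simp)+
  with power_sub_one_log_concave[of x b] assms show ?thesis
    by (simp add: divide_simps power2_eq_square)
qed

lemma grass_ratio_nonneg:
  assumes "x \<ge> 1"
  shows "grass_ratio x n k \<ge> 0"
  unfolding grass_ratio_def using assms
  by (intro mult_nonneg_nonneg divide_nonneg_nonneg power_sub_one_nonneg) simp_all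

lemma grass_ratio_Suc_le:
  assumes "x > 1" "2 * k + 3 \<le> n"
  shows "grass_ratio x n (Suc k) \<le> grass_ratio x n k"
proof -
  define b where "b = n - 2 * Suc k - 1"
  define A0 where "A0 = (x ^ Suc (n - k) - 1) / (x ^ Suc k - 1)"
  define A1 where "A1 = (x ^ Suc (n - Suc k) - 1) / (x ^ Suc (Suc k) - 1)"
  have "n - 2 * Suc k + 1 = b + 2" "n - 2*k - 1 = b + 2" "n - 2*k + 1 = b + 4"
    using assms(2) by (auto simp: b_def)
  then have ratios: "grass_ratio x n (Suc k) = x * A1 * ((x ^ b - 1) / (x ^ (b + 2) - 1))"
      "grass_ratio x n k = x * A0 * ((x ^ (b + 2) - 1) / (x ^ (b + 4) - 1))"
    unfolding grass_ratio_def A0_def A1_def b_def by simp_all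
  have "x ^ Suc k - 1 > 0"
    by (rule power_sub_one_pos[OF assms(1)]) simp
  moreover have "x ^ Suc k \<le> x ^ Suc (Suc k)" "x ^ Suc (n - Suc k) \<le> x ^ Suc (n - k)"
    using assms(1) by (simp_all add: power_increasing)
  moreover have "x ^ Suc (n - Suc k) \<ge> 1"
    using assms(1) by (intro one_le_power) simp
  ultimately have "A1 \<le> A0"
    unfolding A0_def A1_def by (intro frac_le) simp_all
  moreover have "A1 \<ge> 0" "(x ^ b - 1) / (x ^ (b + 2) - 1) \<ge> 0"
    unfolding A1_def using assms(1) by (intro divide_nonneg_nonneg power_sub_one_nonneg; simp)+
  ultimately show ?thesis
    unfolding ratios using assms(1) power_sub_one_ratio_mono[OF assms(1), of b]
    by (intro mult_mono mult_left_mono) simp_all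
qed

lemma log_concave_of_ratio_antitone:
  fixes m r :: "nat \<Rightarrow> real"
  assumes "m (Suc k) = r k * m k" "m (Suc (Suc k)) = r (Suc k) * m (Suc k)"
    and "0 \<le> r (Suc k)" "r (Suc k) \<le> r k"
  shows "m k * m (Suc (Suc k)) \<le> (m (Suc k))\<^sup>2"
proof -
  have "m k * m (Suc (Suc k)) = r k * r (Suc k) * (m k)\<^sup>2"
    using assms(1,2) by (simp add: power2_eq_square)
  also have "\<dots> \<le> r k * r k * (m k)\<^sup>2"
    using assms(3,4) by (intro mult_right_mono mult_left_mono) auto
  also have "\<dots> = (m (Suc k))\<^sup>2"
    using assms(1) by (simp add: power2_eq_square)
  finally show ?thesis .
qed

theorem theorem6:
  fixes q n d :: nat and i :: int
  assumes "prime_power q" and "q \<ge> 2" and "n \<ge> 1" and "d \<ge> 1"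
    and "real d < (real n + 1) / 2"
    and "1 \<le> i" and "i \<le> int d - 1"
  shows "(grass_mult q n i)^2 \<ge> grass_mult q n (i - 1) * grass_mult q n (i + 1)"
proof -
  define k where "k = nat (i - 1)"
  have k: "i = int (Suc k)"
    using assms(6) by (simp add: k_def)
  have "real (2 * d) < real (n + 1)"
    using assms(5) by simp
  then have "2 * d \<le> n"
    by (simp only: of_nat_less_iff)
  moreover have "Suc (Suc k) \<le> d"
    using assms(7) k by simp
  ultimately have "2 * k + 3 \<le> n"
    by linarith
  define m where "m j = grass_mult q n (int j)" for j
  have x1: "real q > 1"
    using assms(2) by simp
  have "m k * m (Suc (Suc k)) \<le> (m (Suc k))\<^sup>2"
  proof (rule log_concave_of_ratio_antitone[where r = "grass_ratio (real q) n"])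
    show "m (Suc k) = grass_ratio (real q) n k * m k"
      unfolding m_def using assms(2) \<open>2 * k + 3 \<le> n\<close> by (intro grass_mult_Suc_eq_ratio) simp_all
    show "m (Suc (Suc k)) = grass_ratio (real q) n (Suc k) * m (Suc k)"
      unfolding m_def using assms(2) \<open>2 * k + 3 \<le> n\<close> by (intro grass_mult_Suc_eq_ratio) simp_all
    show "0 \<le> grass_ratio (real q) n (Suc k)"
      using x1 by (intro grass_ratio_nonneg) simp
    show "grass_ratio (real q) n (Suc k) \<le> grass_ratio (real q) n k"
      using x1 \<open>2 * k + 3 \<le> n\<close> by (rule grass_ratio_Suc_le)
  qed
  moreover have "int (Suc k) - 1 = int k" "int (Suc k) + 1 = int (Suc (Suc k))"
    by simp_all
  ultimately show ?thesis
    unfolding k m_def by (simp only:)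
qed

end
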